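(* Let $\phi$ be an injective endomorphism of a finitely generated free group $F$ and let $W\in\partial F$ be an attracting fixed word of $\phi$. Then there exists an integer $i_0$ such that $|W\wedge\phi(W')|>|W\wedge W'|$ for every $W'\in\bar F=F\sqcup\partial F$ with $|W\wedge W'|\ge i_0$.
   Context: Fix a basis of $F$; elements of $F$ are reduced words, $|W|$ is word length, $\partial F$ is the set of infinite reduced words $W=w_1w_2\cdots$ with $W_i=w_1\cdots w_i$, and $W\wedge V$ is the longest common initial segment of $W,V\in\bar F$. $\phi$ extends continuously and injectively to $\bar F$ (on $\partial F$, $\phi(W)=\lim_i\phi(W_i)$). A fixed infinite word $W$ ($\phi(W)=W$) is an attracting fixed word if $\lim_{i\to\infty}(|W\wedge\phi(W_i)|-i)=+\infty$. *)

theory Defs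
  imports Complex_Main "HOL-Library.Extended_Nat"
begin

text \<open>Free group F of rank n on generators 0..n-1. A letter is (i, True) for the
generator a_i and (i, False) for its inverse.\<close>

type_synonym letter = "nat \<times> bool"

definition linv :: "letter \<Rightarrow> letter" where
  "linv x = (fst x, \<not> snd x)"

definition letters :: "nat \<Rightarrow> letter set" where
  "letters n = {x. fst x < n}"

fun reduced :: "letter list \<Rightarrow> bool" where
  "reduced [] = True"
| "reduced [x] = True"
| "reduced (x # y # ys) = (y \<noteq> linv x \<and> reduced (y # ys))"

definition Fn :: "nat \<Rightarrow> letter list set" where
  "Fn n = {w. set w \<subseteq> letters n \<and> reduced w}"

text \<open>Infinite reduced words; the elements of the boundary of F.\<close>
definition Binf :: "nat \<Rightarrow> (nat \<Rightarrow> letter) set" where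
  "Binf n = {W. (\<forall>k. W k \<in> letters n) \<and> (\<forall>k. W (Suc k) \<noteq> linv (W k))}"

fun freduce :: "letter list \<Rightarrow> letter list" where
  "freduce [] = []"
| "freduce (x # xs) = (case freduce xs of
       [] \<Rightarrow> [x]
     | y # ys \<Rightarrow> (if y = linv x then ys else x # y # ys))"

definition winv :: "letter list \<Rightarrow> letter list" where
  "winv w = rev (map linv w)"

definition phi :: "(nat \<Rightarrow> letter list) \<Rightarrow> letter list \<Rightarrow> letter list" where
  "phi g w = freduce (concat (map (\<lambda>x. if snd x then g (fst x) else winv (g (fst x))) w))"

definition pref :: "(nat \<Rightarrow> letter) \<Rightarrow> nat \<Rightarrow> letter list" where
  "pref W i = map W [0..<i]"

text \<open>Extension of phi to infinite words: phi(W) = lim phi(W_i), the limit taken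
letterwise (the k-th letter of phi(W) is eventually the k-th letter of phi(W_i)).\<close>
definition phi_inf :: "(nat \<Rightarrow> letter list) \<Rightarrow> (nat \<Rightarrow> letter) \<Rightarrow> nat \<Rightarrow> letter" where
  "phi_inf g W k = (THE a. \<forall>\<^sub>F i in sequentially.
       k < length (phi g (pref W i)) \<and> phi g (pref W i) ! k = a)"

datatype fbar = Fin "letter list" | Inf "nat \<Rightarrow> letter"

definition Fbar :: "nat \<Rightarrow> fbar set" where
  "Fbar n = Fin ` Fn n \<union> Inf ` Binf n"

fun phibar :: "(nat \<Rightarrow> letter list) \<Rightarrow> fbar \<Rightarrow> fbar" where
  "phibar g (Fin w) = Fin (phi g w)"
| "phibar g (Inf W) = Inf (phi_inf g W)"

fun letter_at :: "fbar \<Rightarrow> nat \<Rightarrow> letter option" where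
  "letter_at (Fin w) k = (if k < length w then Some (w ! k) else None)"
| "letter_at (Inf W) k = Some (W k)"

definition cp_len :: "fbar \<Rightarrow> fbar \<Rightarrow> enat" where
  "cp_len X Y = (if \<forall>k. letter_at X k \<noteq> None \<and> letter_at X k = letter_at Y k then \<infinity>
     else enat (LEAST k. letter_at X k = None \<or> letter_at X k \<noteq> letter_at Y k))"

definition attracting_fixed :: "nat \<Rightarrow> (nat \<Rightarrow> letter list) \<Rightarrow> (nat \<Rightarrow> letter) \<Rightarrow> bool" where
  "attracting_fixed n g W \<longleftrightarrow> W \<in> Binf n \<and> phi_inf g W = W \<and>
     filterlim (\<lambda>i. int (the_enat (cp_len (Inf W) (Fin (phi g (pref W i))))) - int i)
       at_top sequentially"

end

theory Submission
  imports Defs "HOL-Library.Sublist"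
begin

(* Work in the tree metric d(x, y) = |x^-1 y| of the Cayley graph of F. Every generator image has
   length at most M, and by injectivity only words of length at most K are mapped into the 2M-ball.
   Suppose W' shares the prefix W_k with W, k large, but phi(W') does not start with W_(k+1).
   Walking letter by letter along phi(W_0), ..., phi(W_k) one enters the branch of W_(k+1) within
   distance M of it at some step p < k; continuing along W' one leaves that branch again within
   distance M. These two points are 2M-close, so the subword of W' between them has length at most
   K, whence k - p <= K. Then phi(W_k) stays within (K + 1) M of W_(k+1), whereas the attracting
   property makes phi(W_k) agree with W far beyond position k + 1 + (K + 1) M. *)

section \<open>Free reduction\<close>

fun reduce_cons :: "letter \<Rightarrow> letter list \<Rightarrow> letter list" where
  "reduce_cons x [] = [x]"
| "reduce_cons x (y # ys) = (if y = linv x then ys else x # y # ys)"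

lemma freduce_Cons: "freduce (x # xs) = reduce_cons x (freduce xs)"
  by (cases "freduce xs") auto

declare freduce.simps(2)[simp del]

lemma linv_linv [simp]: "linv (linv x) = x"
  by (simp add: linv_def)

lemma reduced_Cons_iff: "reduced (x # xs) \<longleftrightarrow> reduced xs \<and> (xs = [] \<or> hd xs \<noteq> linv x)"
  by (cases xs) auto

lemma reduced_append_iff:
  "reduced (xs @ ys) \<longleftrightarrow> reduced xs \<and> reduced ys \<and> (xs = [] \<or> ys = [] \<or> hd ys \<noteq> linv (last xs))"
  by (induct xs) (auto simp: reduced_Cons_iff neq_Nil_conv)

lemma reduced_reduce_cons: "reduced r \<Longrightarrow> reduced (reduce_cons x r)"
  by (cases r) (auto simp: reduced_Cons_iff)

lemma reduced_freduce: "reduced (freduce xs)"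
  by (induct xs) (auto simp: freduce_Cons reduced_reduce_cons)

lemma reduce_cons_reduced: "reduced (x # xs) \<Longrightarrow> reduce_cons x xs = x # xs"
  by (cases xs) auto

lemma freduce_reduced: "reduced xs \<Longrightarrow> freduce xs = xs"
  by (induct xs) (auto simp: freduce_Cons reduce_cons_reduced reduced_Cons_iff)

lemma reduce_cons_linv: "reduced u \<Longrightarrow> reduce_cons x (reduce_cons (linv x) u) = u"
  by (cases u rule: remdups_adj.cases) (auto simp: reduced_Cons_iff)

lemma freduce_append: "freduce (xs @ ys) = foldr reduce_cons xs (freduce ys)"
  by (induct xs) (auto simp: freduce_Cons)

lemma reduced_foldr_reduce_cons: "reduced w \<Longrightarrow> reduced (foldr reduce_cons xs w)"
  by (induct xs) (auto simp: reduced_reduce_cons)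

lemma foldr_reduce_cons_freduce: "reduced w \<Longrightarrow> foldr reduce_cons (freduce xs) w = foldr reduce_cons xs w"
proof (induct xs)
  case (Cons x xs)
  have step: "foldr reduce_cons (reduce_cons x r) w = foldr reduce_cons (x # r) w" for r
    using Cons.prems
    by (cases r) (auto simp: reduce_cons_linv reduced_foldr_reduce_cons)
  show ?case
    using step[of "freduce xs"] Cons by (simp add: freduce_Cons)
qed simp

lemma freduce_append_freduce_left: "freduce (freduce xs @ ys) = freduce (xs @ ys)"
  by (simp add: freduce_append foldr_reduce_cons_freduce reduced_freduce)

lemma freduce_append_freduce_right: "freduce (xs @ freduce ys) = freduce (xs @ ys)"
  by (simp add: freduce_append freduce_reduced reduced_freduce)

lemma length_freduce_le: "length (freduce xs) \<le> length xs"
proof (induct xs)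
  case (Cons x xs)
  then show ?case
    by (cases "freduce xs") (auto simp: freduce_Cons)
qed simp

lemma set_freduce_subset: "set (freduce xs) \<subseteq> set xs"
proof (induct xs)
  case (Cons x xs)
  then show ?case
    by (cases "freduce xs") (auto simp: freduce_Cons)
qed simp

lemma winv_Cons: "winv (x # xs) = winv xs @ [linv x]"
  by (simp add: winv_def)

lemma winv_winv [simp]: "winv (winv xs) = xs"
  by (simp add: winv_def rev_map comp_def)

lemma length_winv [simp]: "length (winv xs) = length xs"
  by (simp add: winv_def)

lemma reduced_winv: "reduced xs \<Longrightarrow> reduced (winv xs)"
  by (induct xs) (auto simp: winv_def reduced_append_iff reduced_Cons_iff last_rev hd_map)

lemma freduce_append_winv: "freduce (ws @ winv ws @ ys) = freduce ys"
proof (induct ws arbitrary: ys)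
  case (Cons a ws)
  have "freduce ((a # ws) @ winv (a # ws) @ ys) = reduce_cons a (freduce (ws @ winv ws @ linv a # ys))"
    by (simp add: winv_Cons freduce_Cons)
  also have "\<dots> = freduce ys"
    by (simp add: Cons freduce_Cons reduce_cons_linv reduced_freduce)
  finally show ?case .
qed (simp add: winv_def)

lemma freduce_winv_append: "freduce (winv ws @ ws @ ys) = freduce ys"
  using freduce_append_winv[of "winv ws"] by simp

section \<open>The tree metric\<close>

abbreviation lcp_length :: "'a list \<Rightarrow> 'a list \<Rightarrow> nat" where
  "lcp_length xs ys \<equiv> length (longest_common_prefix xs ys)"

lemma longest_common_prefix_commute: "longest_common_prefix xs ys = longest_common_prefix ys xs"
  by (induct xs ys rule: longest_common_prefix.induct) auto

lemma longest_common_prefix_prefix: "prefix xs ys \<Longrightarrow> longest_common_prefix xs ys = xs"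
  by (induct xs arbitrary: ys) (auto simp: prefix_def)

lemma lcp_length_branch:
  "prefix z y \<Longrightarrow> \<not> prefix z x \<Longrightarrow> lcp_length x z = lcp_length x y \<and> lcp_length x y < length z"
proof (induct z arbitrary: x y)
  case (Cons c zs)
  then obtain ys where y: "y = c # ys" "prefix zs ys"
    by (auto simp: prefix_def)
  with Cons show ?case
    by (cases x) auto
qed simp

definition wdist :: "letter list \<Rightarrow> letter list \<Rightarrow> nat" where
  "wdist x y = length (freduce (winv x @ y))"

lemma wdist_lcp_length:
  "reduced x \<Longrightarrow> reduced y \<Longrightarrow> wdist x y + 2 * lcp_length x y = length x + length y"
proof (induct x y rule: longest_common_prefix.induct)
  case (1 a as b bs)
  show ?case
  proof (cases "a = b")
    case True
    have "freduce (winv (a # as) @ b # bs) = freduce (winv as @ freduce ([linv a] @ [a] @ bs))"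
      using True by (simp add: winv_Cons freduce_append_freduce_right)
    also have "\<dots> = freduce (winv as @ bs)"
      using freduce_append_winv[of "[linv a]" bs] by (simp add: winv_def freduce_append_freduce_right)
    finally show ?thesis
      using 1 True by (simp add: wdist_def reduced_Cons_iff)
  next
    case False
    have "reduced (winv as @ linv a # b # bs)"
      using 1(2,3) False
      by (auto simp: reduced_append_iff reduced_Cons_iff reduced_winv[unfolded winv_def] winv_def last_rev hd_map)
    then show ?thesis
      using False by (simp add: wdist_def winv_Cons freduce_reduced)
  qed
qed (auto simp: wdist_def winv_def freduce_reduced reduced_winv[unfolded winv_def])

lemma wdist_commute: "reduced x \<Longrightarrow> reduced y \<Longrightarrow> wdist x y = wdist y x"
  using wdist_lcp_length[of x y] wdist_lcp_length[of y x] longest_common_prefix_commute[of x y]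
  by simp

lemma wdist_prefix: "reduced z \<Longrightarrow> reduced y \<Longrightarrow> prefix z y \<Longrightarrow> wdist z y + length z = length y"
  using wdist_lcp_length[of z y] longest_common_prefix_prefix[of z y] by simp

text \<open>In the Cayley tree, a geodesic from x to y passes through every prefix z of y that is
  not a prefix of x.\<close>
lemma wdist_branch_le:
  assumes "reduced x" "reduced y" "reduced z" "prefix z y" "\<not> prefix z x"
  shows "wdist x z \<le> wdist x y"
  using assms wdist_lcp_length[of x y] wdist_lcp_length[of x z] lcp_length_branch[of z y x]
    prefix_length_le[of z y]
  by simp

lemma wdist_triangle: "wdist x z \<le> wdist x y + wdist y z"
proof -
  have "freduce (winv x @ z) = freduce (winv x @ freduce (y @ winv y @ z))"
    by (simp add: freduce_append_winv freduce_append_freduce_right)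
  also have "\<dots> = freduce (freduce (winv x @ y) @ freduce (winv y @ z))"
    by (simp add: freduce_append_freduce_left freduce_append_freduce_right)
  finally show ?thesis
    unfolding wdist_def
    using length_freduce_le[of "freduce (winv x @ y) @ freduce (winv y @ z)"] by simp
qed

lemma wdist_freduce_append: "wdist x (freduce (x @ q)) = length (freduce q)"
  by (simp add: wdist_def freduce_append_freduce_right freduce_winv_append)

section \<open>The endomorphism and prefixes of infinite words\<close>

lemma phi_append: "phi g (u @ v) = freduce (phi g u @ phi g v)"
  by (simp add: phi_def freduce_append_freduce_left freduce_append_freduce_right)

lemma phi_Nil [simp]: "phi g [] = []"
  by (simp add: phi_def)

lemma reduced_phi: "reduced (phi g w)"
  by (simp add: phi_def reduced_freduce)

lemma wdist_phi_append: "wdist (phi g u) (phi g (u @ v)) = length (phi g v)"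
  by (simp add: phi_append wdist_freduce_append freduce_reduced reduced_phi)

lemma length_phi_le:
  assumes "set w \<subseteq> letters n" and "\<forall>a\<in>letters n. length (phi g [a]) \<le> M"
  shows "length (phi g w) \<le> length w * M"
  using assms
proof (induct w)
  case (Cons a w)
  have "length (phi g (a # w)) \<le> length (phi g [a]) + length (phi g w)"
    using phi_append[of g "[a]" w] length_freduce_le[of "phi g [a] @ phi g w"] by simp
  with Cons show ?case
    by fastforce
qed simp

lemma finite_letters: "finite (letters n)"
proof -
  have "letters n = {..<n} \<times> UNIV"
    by (auto simp: letters_def)
  then show ?thesis
    by simp
qed

lemma linv_letters: "a \<in> letters n \<Longrightarrow> linv a \<in> letters n"
  by (simp add: letters_def linv_def)

lemma set_phi_subset:
  assumes "\<forall>i<n. set (g i) \<subseteq> letters n" and "set w \<subseteq> letters n"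
  shows "set (phi g w) \<subseteq> letters n"
proof -
  have "set (if snd x then g (fst x) else winv (g (fst x))) \<subseteq> letters n" if "x \<in> set w" for x
  proof -
    have "set (g (fst x)) \<subseteq> letters n"
      using assms that by (auto simp: letters_def)
    then show ?thesis
      by (auto simp: winv_def linv_letters)
  qed
  then have "set (concat (map (\<lambda>x. if snd x then g (fst x) else winv (g (fst x))) w)) \<subseteq> letters n"
    unfolding set_concat set_map by blast
  then show ?thesis
    unfolding phi_def using set_freduce_subset by blast
qed

lemma inj_phi_short_image_bounded:
  assumes "\<forall>i<n. set (g i) \<subseteq> letters n" and "inj_on (phi g) (Fn n)"
  shows "\<exists>K. \<forall>w\<in>Fn n. length (phi g w) \<le> L \<longrightarrow> length w \<le> K"
proof -
  define S where "S = {w \<in> Fn n. length (phi g w) \<le> L}"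
  have "phi g ` S \<subseteq> {v. set v \<subseteq> letters n \<and> length v \<le> L}"
    using set_phi_subset[OF assms(1)] by (auto simp: S_def Fn_def)
  then have "finite (phi g ` S)"
    using finite_lists_length_le[OF finite_letters] finite_subset by blast
  moreover have "inj_on (phi g) S"
    using assms(2) by (rule inj_on_subset) (auto simp: S_def)
  ultimately have "finite (length ` S)"
    using finite_imageD by blast
  then show ?thesis
    by (auto simp: S_def finite_nat_set_iff_bounded_le)
qed

lemma length_pref [simp]: "length (pref W i) = i"
  by (simp add: pref_def)

lemma pref_0 [simp]: "pref W 0 = []"
  by (simp add: pref_def)

lemma pref_Suc: "pref W (Suc i) = pref W i @ [W i]"
  by (simp add: pref_def)

lemma pref_split: "i \<le> j \<Longrightarrow> pref W j = pref W i @ map W [i..<j]"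
  by (metis le_add_diff_inverse map_append pref_def upt_add_eq_append zero_le)

lemma take_pref: "i \<le> j \<Longrightarrow> take i (pref W j) = pref W i"
  by (simp add: pref_def take_map)

lemma reduced_pref: "W \<in> Binf n \<Longrightarrow> reduced (pref W i)"
proof (induct i)
  case (Suc i)
  then show ?case
    by (cases i) (auto simp: pref_Suc reduced_append_iff Binf_def)
qed simp

lemma set_pref_subset: "W \<in> Binf n \<Longrightarrow> set (pref W i) \<subseteq> letters n"
  by (auto simp: Binf_def pref_def)

lemma enat_le_cp_len_iff: "enat m \<le> cp_len (Inf W) X \<longleftrightarrow> (\<forall>j<m. letter_at X j = Some (W j))"
proof (cases "\<forall>k. letter_at X k = Some (W k)")
  case False
  let ?P = "\<lambda>k. letter_at X k \<noteq> Some (W k)"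
  have "cp_len (Inf W) X = enat (Least ?P)"
    using False by (auto simp: cp_len_def eq_commute)
  moreover have "m \<le> Least ?P \<longleftrightarrow> (\<forall>j<m. \<not> ?P j)"
    using False not_less_Least[of _ ?P] LeastI_ex[of ?P] by (meson le_less_trans not_le)
  ultimately show ?thesis
    by simp
qed (simp add: cp_len_def)

lemma cp_len_eq_infinity_iff: "cp_len (Inf W) X = \<infinity> \<longleftrightarrow> X = Inf W"
proof
  assume "cp_len (Inf W) X = \<infinity>"
  then have all: "letter_at X j = Some (W j)" for j
    using enat_le_cp_len_iff[of "Suc j" W X] by simp
  show "X = Inf W"
  proof (cases X)
    case (Fin w)
    then show ?thesis
      using all[of "length w"] by simp
  qed (use all in auto)
qed (simp add: cp_len_def)

lemma prefix_pref_iff: "prefix (pref W m) w \<longleftrightarrow> (\<forall>j<m. j < length w \<and> w ! j = W j)"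
proof
  assume "prefix (pref W m) w"
  then show "\<forall>j<m. j < length w \<and> w ! j = W j"
    by (auto simp: prefix_def pref_def nth_append)
next
  assume agree: "\<forall>j<m. j < length w \<and> w ! j = W j"
  then have "m \<le> length w"
    by (cases m) auto
  with agree have "take m w = pref W m"
    by (auto simp: pref_def intro: nth_equalityI)
  then show "prefix (pref W m) w"
    by (metis take_is_prefix)
qed

lemma enat_le_cp_len_Fin_iff: "enat m \<le> cp_len (Inf W) (Fin w) \<longleftrightarrow> prefix (pref W m) w"
  by (auto simp: enat_le_cp_len_iff prefix_pref_iff)

lemma enat_le_cp_len_Inf_iff: "enat m \<le> cp_len (Inf W) (Inf U) \<longleftrightarrow> pref U m = pref W m"
  by (auto simp: enat_le_cp_len_iff pref_def)

section \<open>Bounded cancellation along an attracting fixed word\<close>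

lemma nat_crossing:
  fixes P :: "nat \<Rightarrow> bool"
  assumes "P 0" and "\<not> P b"
  shows "\<exists>j<b. P j \<and> \<not> P (Suc j)"
  using assms by (induct b) (auto intro: less_SucI)

lemma wdist_phi_step_le:
  assumes "\<forall>a\<in>letters n. length (phi g [a]) \<le> M" and "set v \<subseteq> letters n" and "j < length v"
  shows "wdist (phi g (u @ take j v)) (phi g (u @ take (Suc j) v)) \<le> M"
proof -
  have "v ! j \<in> letters n"
    using assms(2,3) by (meson nth_mem subsetD)
  then show ?thesis
    using assms(1,3) wdist_phi_append[of g "u @ take j v" "[v ! j]"]
    by (simp add: take_Suc_conv_app_nth)
qed

lemma phi_enters_prefix_near:
  assumes M: "\<forall>a\<in>letters n. length (phi g [a]) \<le> M" and v: "set v \<subseteq> letters n"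
    and z: "reduced z" "z \<noteq> []" "prefix z (phi g v)"
  shows "\<exists>j<length v. wdist (phi g (take j v)) z \<le> M"
proof -
  obtain j where j: "j < length v" "\<not> prefix z (phi g (take j v))" "prefix z (phi g (take (Suc j) v))"
    using nat_crossing[of "\<lambda>j. \<not> prefix z (phi g (take j v))" "length v"] z by auto
  have "wdist (phi g (take j v)) z \<le> wdist (phi g (take j v)) (phi g (take (Suc j) v))"
    using j z by (intro wdist_branch_le) (simp_all add: reduced_phi)
  also have "\<dots> \<le> M"
    using wdist_phi_step_le[OF M v j(1), of "[]"] by simp
  finally show ?thesis
    using j(1) by blast
qed

lemma phi_leaves_prefix_near:
  assumes M: "\<forall>a\<in>letters n. length (phi g [a]) \<le> M" and v: "set v \<subseteq> letters n"
    and z: "reduced z" "prefix z (phi g u)" "\<not> prefix z (phi g (u @ v))"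
  shows "\<exists>j<length v. wdist (phi g (u @ take (Suc j) v)) z \<le> M"
proof -
  obtain j where j: "j < length v" "prefix z (phi g (u @ take j v))"
      "\<not> prefix z (phi g (u @ take (Suc j) v))"
    using nat_crossing[of "\<lambda>j. prefix z (phi g (u @ take j v))" "length v"] z by auto
  have "wdist (phi g (u @ take (Suc j) v)) z
      \<le> wdist (phi g (u @ take (Suc j) v)) (phi g (u @ take j v))"
    using j z by (intro wdist_branch_le) (simp_all add: reduced_phi)
  also have "\<dots> \<le> M"
    using wdist_phi_step_le[OF M v j(1)] by (simp add: wdist_commute reduced_phi)
  finally show ?thesis
    using j(1) by blast
qed

lemma gap_le_if_wdist_phi_le:
  assumes W: "W \<in> Binf n"
    and K: "\<forall>w\<in>Fn n. length (phi g w) \<le> L \<longrightarrow> length w \<le> K"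
    and "p \<le> k" and V: "reduced (pref W k @ V)" "set V \<subseteq> letters n"
    and close: "wdist (phi g (pref W p)) (phi g (pref W k @ V)) \<le> L"
  shows "k - p \<le> K"
proof -
  define R where "R = map W [p..<k] @ V"
  have R_split: "pref W k @ V = pref W p @ R"
    using pref_split[OF \<open>p \<le> k\<close>] by (simp add: R_def)
  have "R \<in> Fn n"
    using W V R_split by (auto simp: Fn_def R_def Binf_def reduced_append_iff)
  moreover have "length (phi g R) \<le> L"
    using close R_split by (simp add: wdist_phi_append)
  ultimately show ?thesis
    using K by (auto simp: R_def)
qed

lemma phi_append_keeps_prefix:
  assumes W: "W \<in> Binf n"
    and M: "\<forall>a\<in>letters n. length (phi g [a]) \<le> M"
    and K: "\<forall>w\<in>Fn n. length (phi g w) \<le> 2 * M \<longrightarrow> length w \<le> K"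
    and long: "prefix (pref W m) (phi g (pref W k))" "Suc k + (K + 1) * M < m"
    and V: "reduced (pref W k @ V)" "set V \<subseteq> letters n"
  shows "prefix (pref W (Suc k)) (phi g (pref W k @ V))"
proof (rule ccontr)
  define z where "z = pref W (Suc k)"
  assume "\<not> prefix (pref W (Suc k)) (phi g (pref W k @ V))"
  then have leaves: "\<not> prefix z (phi g (pref W k @ V))"
    by (simp add: z_def)
  have z: "reduced z" "z \<noteq> []"
    unfolding z_def using reduced_pref[OF W] by (simp, simp add: pref_Suc)
  have "prefix z (pref W m)"
    using long(2) pref_split[of "Suc k" m W] by (simp add: z_def)
  then have enters: "prefix z (phi g (pref W k))"
    using long(1) by (rule prefix_order.trans)
  obtain p where p: "p < k" "wdist (phi g (pref W p)) z \<le> M"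
    using phi_enters_prefix_near[OF M set_pref_subset[OF W] z enters] by (auto simp: take_pref)
  obtain j where j: "j < length V" "wdist (phi g (pref W k @ take (Suc j) V)) z \<le> M"
    using phi_leaves_prefix_near[OF M V(2) z(1) enters leaves] by blast
  have "reduced (pref W k @ take (Suc j) V)"
    using V(1) reduced_append_iff[of "pref W k @ take (Suc j) V" "drop (Suc j) V"] by simp
  moreover have "set (take (Suc j) V) \<subseteq> letters n"
    using V(2) set_take_subset[of "Suc j" V] by blast
  moreover have "wdist (phi g (pref W p)) (phi g (pref W k @ take (Suc j) V)) \<le> 2 * M"
    using wdist_triangle[of "phi g (pref W p)" "phi g (pref W k @ take (Suc j) V)" z] p(2) j(2)
    by (simp add: wdist_commute z(1) reduced_phi)
  ultimately have "k - p \<le> K"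
    using gap_le_if_wdist_phi_le[OF W K] p(1) by simp
  have "wdist (phi g (pref W p)) (phi g (pref W k)) = length (phi g (map W [p..<k]))"
    using pref_split[of p k W] p(1) by (simp add: wdist_phi_append)
  also have "\<dots> \<le> (k - p) * M"
    using length_phi_le[OF _ M, of "map W [p..<k]"] W by (auto simp: Binf_def)
  also have "\<dots> \<le> K * M"
    using \<open>k - p \<le> K\<close> by simp
  finally have "wdist z (phi g (pref W k)) \<le> M + K * M"
    using wdist_triangle[of z "phi g (pref W k)" "phi g (pref W p)"] p(2)
      wdist_commute[OF z(1) reduced_phi, of g "pref W p"]
    by simp
  moreover have "wdist z (phi g (pref W k)) + Suc k = length (phi g (pref W k))"
    using wdist_prefix[OF z(1) reduced_phi enters] by (simp add: z_def)
  moreover have "m \<le> length (phi g (pref W k))"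
    using prefix_length_le[OF long(1)] by simp
  ultimately show False
    using long(2) by simp
qed

lemma phi_inf_eq_nth:
  assumes "\<forall>\<^sub>F i in sequentially. prefix v (phi g (pref U i))" and "j < length v"
  shows "phi_inf g U j = v ! j"
proof -
  let ?P = "\<lambda>a i. j < length (phi g (pref U i)) \<and> phi g (pref U i) ! j = a"
  have ev: "\<forall>\<^sub>F i in sequentially. ?P (v ! j) i"
    using assms(1) by (rule eventually_mono) (use assms(2) in \<open>auto simp: prefix_def nth_append\<close>)
  show ?thesis
    unfolding phi_inf_def
  proof (rule the_equality)
    fix a
    assume "\<forall>\<^sub>F i in sequentially. ?P a i"
    then have "\<forall>\<^sub>F i in sequentially. a = v ! j"
      using ev by eventually_elim auto
    then show "a = v ! j"
      by simp
  qed (rule ev)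
qed

lemma phibar_extends_common_prefix:
  assumes step: "\<And>V. reduced (pref W k @ V) \<Longrightarrow> set V \<subseteq> letters n
      \<Longrightarrow> prefix (pref W (Suc k)) (phi g (pref W k @ V))"
    and X: "X \<in> Fbar n" "enat k \<le> cp_len (Inf W) X"
  shows "enat (Suc k) \<le> cp_len (Inf W) (phibar g X)"
proof (cases X)
  case (Fin w)
  with X obtain V where "w = pref W k @ V" "w \<in> Fn n"
    by (auto simp: Fbar_def enat_le_cp_len_Fin_iff prefix_def)
  then show ?thesis
    using Fin step by (auto simp: Fn_def enat_le_cp_len_Fin_iff)
next
  case (Inf U)
  with X have U: "U \<in> Binf n" "pref U k = pref W k"
    by (auto simp: Fbar_def enat_le_cp_len_Inf_iff)
  have "\<forall>\<^sub>F i in sequentially. prefix (pref W (Suc k)) (phi g (pref U i))"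
    unfolding eventually_sequentially
  proof (intro exI allI impI)
    fix i
    assume "k \<le> i"
    then have "pref U i = pref W k @ map U [k..<i]"
      using pref_split U(2) by metis
    moreover have "set (map U [k..<i]) \<subseteq> letters n"
      using U(1) by (auto simp: Binf_def)
    ultimately show "prefix (pref W (Suc k)) (phi g (pref U i))"
      using step reduced_pref[OF U(1), of i] by metis
  qed
  then have "pref (phi_inf g U) (Suc k) = pref W (Suc k)"
    by (auto simp: pref_def phi_inf_eq_nth simp del: upt_Suc)
  then show ?thesis
    using Inf by (simp add: enat_le_cp_len_Inf_iff)
qed

lemma attracting_fixed_eventually_extends:
  assumes "\<forall>i<n. g i \<in> Fn n" and "inj_on (phi g) (Fn n)" and "attracting_fixed n g W"
  shows "\<forall>\<^sub>F k in sequentially. \<forall>V. reduced (pref W k @ V) \<and> set V \<subseteq> letters n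
           \<longrightarrow> prefix (pref W (Suc k)) (phi g (pref W k @ V))"
proof -
  have W: "W \<in> Binf n"
    and lim: "filterlim (\<lambda>i. int (the_enat (cp_len (Inf W) (Fin (phi g (pref W i))))) - int i)
       at_top sequentially"
    using assms(3) by (auto simp: attracting_fixed_def)
  obtain M where M: "\<forall>a\<in>letters n. length (phi g [a]) \<le> M"
    using finite_letters finite_nat_set_iff_bounded_le[of "(\<lambda>a. length (phi g [a])) ` letters n"]
    by auto
  obtain K where K: "\<forall>w\<in>Fn n. length (phi g w) \<le> 2 * M \<longrightarrow> length w \<le> K"
    using inj_phi_short_image_bounded[OF _ assms(2)] assms(1) unfolding Fn_def by blast
  define C where "C = (K + 1) * M + 2"
  have "\<forall>\<^sub>F k in sequentially.
      int C \<le> int (the_enat (cp_len (Inf W) (Fin (phi g (pref W k))))) - int k"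
    using lim by (simp add: filterlim_at_top)
  then show ?thesis
  proof (rule eventually_mono)
    fix k
    assume far: "int C \<le> int (the_enat (cp_len (Inf W) (Fin (phi g (pref W k))))) - int k"
    obtain m where m: "cp_len (Inf W) (Fin (phi g (pref W k))) = enat m"
      using cp_len_eq_infinity_iff[of W "Fin (phi g (pref W k))"] not_infinity_eq by blast
    then have "prefix (pref W m) (phi g (pref W k))"
      by (simp add: enat_le_cp_len_Fin_iff[symmetric])
    moreover have "C + k \<le> m"
      using far m by simp
    then have "Suc k + (K + 1) * M < m"
      by (simp add: C_def)
    ultimately show "\<forall>V. reduced (pref W k @ V) \<and> set V \<subseteq> letters n
        \<longrightarrow> prefix (pref W (Suc k)) (phi g (pref W k @ V))"
      using phi_append_keeps_prefix[OF W M K] by blast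
  qed
qed

theorem lemma2p2:
  fixes n :: nat and g :: "nat \<Rightarrow> letter list" and W :: "nat \<Rightarrow> letter"
  assumes "\<forall>i<n. g i \<in> Fn n"
    and "inj_on (phi g) (Fn n)"
    and "attracting_fixed n g W"
  shows "\<exists>i0::nat. \<forall>W'\<in>Fbar n. W' \<noteq> Inf W \<and> enat i0 \<le> cp_len (Inf W) W' \<longrightarrow>
           cp_len (Inf W) (phibar g W') > cp_len (Inf W) W'"
proof -
  obtain i0 where step: "\<And>k V. i0 \<le> k \<Longrightarrow> reduced (pref W k @ V) \<Longrightarrow> set V \<subseteq> letters n
      \<Longrightarrow> prefix (pref W (Suc k)) (phi g (pref W k @ V))"
    using attracting_fixed_eventually_extends[OF assms] unfolding eventually_sequentially by blast
  show ?thesis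
  proof (intro exI ballI impI)
    fix X
    assume X: "X \<in> Fbar n" and near: "X \<noteq> Inf W \<and> enat i0 \<le> cp_len (Inf W) X"
    then obtain k where k: "cp_len (Inf W) X = enat k" "i0 \<le> k"
      using cp_len_eq_infinity_iff[of W X] by (cases "cp_len (Inf W) X") auto
    then have "enat (Suc k) \<le> cp_len (Inf W) (phibar g X)"
      using X step by (intro phibar_extends_common_prefix) auto
    with k show "cp_len (Inf W) X < cp_len (Inf W) (phibar g X)"
      by (simp add: Suc_ile_eq)
  qed
qed

end
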